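(* Fix $\beta\ne0$. For any episode $k\in[K]$, with $\pi^k$ the policy used in episode $k$ and $\mathcal{F}_k$ the history before episode $k$, $$\frac1\beta\big[e^{\beta V_1^*(s_1)}-e^{\beta V_1^{\pi^k}(s_1)}\big]=\mathbb{E}\Big[\sum_{h=1}^H\overline{\Delta}_h\big(s_h,\pi^k_h(s_h);\tau^{\pi^k}_{h-1}\big)\,\Big|\,\mathcal{F}_k\Big],$$ where $\tau^{\pi^k}=((s_h,\pi_h^k(s_h)))_{h\in[H]}$ is the random trajectory generated from $s_1$ by following $\pi^k$ under the transitions $\mathcal{P}$.
   Context: Episodic finite-horizon tabular MDP with finite states $\mathcal{S}$, finite actions $\mathcal{A}$, horizon $H$, $K$ episodes, transitions $\mathcal{P}_h(\cdot\mid s,a)$, deterministic rewards $r_h:\mathcal{S}\times\mathcal{A}\to[0,1]$, fixed initial state $s_1$. A policy is $\pi=(\pi_h:\mathcal{S}\to\mathcal{A})_{h\in[H]}$; the learner's policy $\pi^k$ in episode $k$ is determined by $\mathcal{F}_k$. For $\beta\ne0$: $V_h^\pi(s)=\frac1\beta\log\mathbb{E}[e^{\beta\sum_{i=h}^H r_i(s_i,\pi_i(s_i))}\mid s_h=s]$, $Q_h^\pi(s,a)$ likewise with $a_h=a$ and $\pi$ thereafter; $V^*_h=\sup_\pi V^\pi_h$ attained by an optimal $\pi^*$, $Q^*_h=Q^{\pi^*}_h$. For a trajectory prefix $\tau_{h-1}=((s_j,a_j))_{j<h}$, $R(\tau_{h-1})=\sum_{j<h}r_j(s_j,a_j)$ (zero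 for $h=1$), and the semi-normalized gap is $\overline{\Delta}_h(s,a;\tau_{h-1})=\frac1\beta e^{\beta R(\tau_{h-1})}[e^{\beta V^*_h(s)}-e^{\beta Q^*_h(s,a)}]$. *)

theory Defs
  imports "HOL-Probability.Probability"
begin

text \<open>Steps are indexed 1..H. A (deterministic Markov) policy is
  a map pol :: nat => 's => 'a (pol h s is the action taken at step h in state s).\<close>

type_synonym ('s,'a) policy = "nat \<Rightarrow> 's \<Rightarrow> 'a"

text \<open>Distribution of the list of states [s_h, s_(h+1), ..., s_(h+n-1)] visited when
  starting in state s at step h and following policy pol for n steps.\<close>
fun traj :: "(nat \<Rightarrow> 's \<Rightarrow> 'a \<Rightarrow> 's pmf) \<Rightarrow> ('s,'a) policy \<Rightarrow> nat \<Rightarrow> nat \<Rightarrow> 's \<Rightarrow> 's list pmf" where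
  "traj P pol h 0 s = return_pmf []"
| "traj P pol h (Suc n) s =
     (if n = 0 then return_pmf [s]
      else bind_pmf (P h s (pol h s)) (\<lambda>s'. map_pmf (Cons s) (traj P pol (Suc h) n s')))"

definition ret :: "(nat \<Rightarrow> 's \<Rightarrow> 'a \<Rightarrow> real) \<Rightarrow> ('s,'a) policy \<Rightarrow> nat \<Rightarrow> 's list \<Rightarrow> real" where
  "ret r pol h xs = (\<Sum>i<length xs. r (h + i) (xs ! i) (pol (h + i) (xs ! i)))"

definition Vpi :: "real \<Rightarrow> nat \<Rightarrow> (nat \<Rightarrow> 's \<Rightarrow> 'a \<Rightarrow> 's pmf) \<Rightarrow> (nat \<Rightarrow> 's \<Rightarrow> 'a \<Rightarrow> real)
    \<Rightarrow> ('s,'a) policy \<Rightarrow> nat \<Rightarrow> 's \<Rightarrow> real" where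
  "Vpi \<beta> H P r pol h s =
     (1 / \<beta>) * ln (measure_pmf.expectation (traj P pol h (Suc H - h) s)
                      (\<lambda>xs. exp (\<beta> * ret r pol h xs)))"

definition Qpi :: "real \<Rightarrow> nat \<Rightarrow> (nat \<Rightarrow> 's \<Rightarrow> 'a \<Rightarrow> 's pmf) \<Rightarrow> (nat \<Rightarrow> 's \<Rightarrow> 'a \<Rightarrow> real)
    \<Rightarrow> ('s,'a) policy \<Rightarrow> nat \<Rightarrow> 's \<Rightarrow> 'a \<Rightarrow> real" where
  "Qpi \<beta> H P r pol h s a = Vpi \<beta> H P r (pol(h := (\<lambda>_. a))) h s"

definition Vstar :: "real \<Rightarrow> nat \<Rightarrow> (nat \<Rightarrow> 's \<Rightarrow> 'a \<Rightarrow> 's pmf) \<Rightarrow> (nat \<Rightarrow> 's \<Rightarrow> 'a \<Rightarrow> real)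
    \<Rightarrow> nat \<Rightarrow> 's \<Rightarrow> real" where
  "Vstar \<beta> H P r h s = (SUP pol. Vpi \<beta> H P r pol h s)"

definition optimal_policy :: "real \<Rightarrow> nat \<Rightarrow> (nat \<Rightarrow> 's \<Rightarrow> 'a \<Rightarrow> 's pmf) \<Rightarrow> (nat \<Rightarrow> 's \<Rightarrow> 'a \<Rightarrow> real)
    \<Rightarrow> ('s,'a) policy \<Rightarrow> bool" where
  "optimal_policy \<beta> H P r pis \<longleftrightarrow>
     (\<forall>h\<in>{1..H}. \<forall>s. Vpi \<beta> H P r pis h s = Vstar \<beta> H P r h s)"

definition Rprefix :: "(nat \<Rightarrow> 's \<Rightarrow> 'a \<Rightarrow> real) \<Rightarrow> ('s \<times> 'a) list \<Rightarrow> real" where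
  "Rprefix r tau = (\<Sum>j<length tau. r (Suc j) (fst (tau ! j)) (snd (tau ! j)))"

text \<open>Semi-normalized gap, with Q* = Q^(pis) for an optimal policy pis.\<close>
definition gap :: "real \<Rightarrow> nat \<Rightarrow> (nat \<Rightarrow> 's \<Rightarrow> 'a \<Rightarrow> 's pmf) \<Rightarrow> (nat \<Rightarrow> 's \<Rightarrow> 'a \<Rightarrow> real)
    \<Rightarrow> ('s,'a) policy \<Rightarrow> nat \<Rightarrow> 's \<Rightarrow> 'a \<Rightarrow> ('s \<times> 'a) list \<Rightarrow> real" where
  "gap \<beta> H P r pis h s a tau =
     (1 / \<beta>) * exp (\<beta> * Rprefix r tau) *
       (exp (\<beta> * Vstar \<beta> H P r h s) - exp (\<beta> * Qpi \<beta> H P r pis h s a))"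

definition traj_prefix :: "('s,'a) policy \<Rightarrow> 's list \<Rightarrow> nat \<Rightarrow> ('s \<times> 'a) list" where
  "traj_prefix pol xs m = map (\<lambda>j. (xs ! j, pol (Suc j) (xs ! j))) [0..<m]"

end

theory Submission
  imports Defs
begin

(* Write W for the exponential utility E[exp(beta R)] of the reward-to-go R, so that the
   left-hand side is (W* - W^pi)/beta at the initial state. For any family U with U = 1 at the
   horizon, unrolling the trajectory of pi one step at a time telescopes U - W^pi into the
   expected sum of Bellman residuals of U along the trajectory, each weighted by exp(beta R) of
   the reward collected so far. For U the exponential utility of an optimal policy these
   weighted residuals are exactly beta times the semi-normalized gaps. *)

lemma expectation_bind_pmf_finite:
  fixes g :: "'b \<Rightarrow> real"
  assumes "finite (set_pmf p)" and "\<And>x. x \<in> set_pmf p \<Longrightarrow> finite (set_pmf (f x))"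
  shows "measure_pmf.expectation (p \<bind> f) g =
         measure_pmf.expectation p (\<lambda>x. measure_pmf.expectation (f x) g)"
proof -
  have "measure_pmf.expectation (p \<bind> f) g =
        (\<Sum>x\<in>set_pmf p. pmf p x *\<^sub>R measure_pmf.expectation (f x) g)"
    using assms by (intro pmf_expectation_bind) auto
  also have "\<dots> = measure_pmf.expectation p (\<lambda>x. measure_pmf.expectation (f x) g)"
    using assms by (subst integral_measure_pmf[of "set_pmf p"]) auto
  finally show ?thesis .
qed

lemma expectation_pos_finite:
  fixes f :: "'b \<Rightarrow> real"
  assumes "finite (set_pmf p)" and "\<And>x. x \<in> set_pmf p \<Longrightarrow> 0 < f x"
  shows "0 < measure_pmf.expectation p f"
proof -
  have "measure_pmf.expectation p f = (\<Sum>x\<in>set_pmf p. f x * pmf p x)"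
    using assms(1) by (rule integral_measure_pmf_real) auto
  also have "\<dots> > 0"
    using assms by (intro sum_pos) (auto simp: set_pmf_not_empty pmf_positive)
  finally show ?thesis .
qed

(* For n = 0 the successor state is sampled and then discarded, so the special case of the
   definition is an instance of the general step. *)
lemma traj_Suc:
  "traj P pol h (Suc n) s = P h s (pol h s) \<bind> (\<lambda>s'. map_pmf ((#) s) (traj P pol (Suc h) n s'))"
  by (cases n) simp_all

declare traj.simps(2) [simp del]

lemma length_traj: "xs \<in> set_pmf (traj P pol h n s) \<Longrightarrow> length xs = n"
  by (induction n arbitrary: h s xs) (auto simp: traj_Suc)

lemma finite_set_pmf_traj:
  fixes P :: "nat \<Rightarrow> 's::finite \<Rightarrow> 'a \<Rightarrow> 's pmf"
  shows "finite (set_pmf (traj P pol h n s))"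
  by (induction n arbitrary: h s) (auto simp: traj_Suc)

lemma expectation_traj_Suc:
  fixes P :: "nat \<Rightarrow> 's::finite \<Rightarrow> 'a \<Rightarrow> 's pmf" and f :: "'s list \<Rightarrow> real"
  shows "measure_pmf.expectation (traj P pol h (Suc n) s) f =
         measure_pmf.expectation (P h s (pol h s))
           (\<lambda>s'. measure_pmf.expectation (traj P pol (Suc h) n s') (\<lambda>xs. f (s # xs)))"
  by (simp add: traj_Suc expectation_bind_pmf_finite finite_set_pmf_traj)

lemma ret_Nil [simp]: "ret r pol h [] = 0"
  by (simp add: ret_def)

lemma ret_Cons [simp]: "ret r pol h (x # xs) = r h x (pol h x) + ret r pol (Suc h) xs"
  unfolding ret_def length_Cons sum.lessThan_Suc_shift by simp

definition exp_utility :: "real \<Rightarrow> (nat \<Rightarrow> 's \<Rightarrow> 'a \<Rightarrow> 's pmf) \<Rightarrow> (nat \<Rightarrow> 's \<Rightarrow> 'a \<Rightarrow> real)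
    \<Rightarrow> ('s,'a) policy \<Rightarrow> nat \<Rightarrow> nat \<Rightarrow> 's \<Rightarrow> real" where
  "exp_utility \<beta> P r pol h n s =
     measure_pmf.expectation (traj P pol h n s) (\<lambda>xs. exp (\<beta> * ret r pol h xs))"

lemma exp_utility_0 [simp]: "exp_utility \<beta> P r pol h 0 s = 1"
  by (simp add: exp_utility_def)

lemma exp_utility_Suc:
  fixes P :: "nat \<Rightarrow> 's::finite \<Rightarrow> 'a \<Rightarrow> 's pmf"
  shows "exp_utility \<beta> P r pol h (Suc n) s =
         exp (\<beta> * r h s (pol h s)) *
         measure_pmf.expectation (P h s (pol h s)) (exp_utility \<beta> P r pol (Suc h) n)"
  by (simp add: exp_utility_def[abs_def] expectation_traj_Suc distrib_left exp_add)

lemma exp_utility_pos: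
  fixes P :: "nat \<Rightarrow> 's::finite \<Rightarrow> 'a \<Rightarrow> 's pmf"
  shows "0 < exp_utility \<beta> P r pol h n s"
  unfolding exp_utility_def by (rule expectation_pos_finite[OF finite_set_pmf_traj]) simp

lemma exp_utility_cong:
  fixes P :: "nat \<Rightarrow> 's::finite \<Rightarrow> 'a \<Rightarrow> 's pmf"
  assumes "\<And>j. h \<le> j \<Longrightarrow> pol j = pol' j"
  shows "exp_utility \<beta> P r pol h n s = exp_utility \<beta> P r pol' h n s"
  using assms
proof (induction n arbitrary: h s)
  case (Suc n)
  then have "exp_utility \<beta> P r pol (Suc h) n = exp_utility \<beta> P r pol' (Suc h) n"
    by (intro ext) simp
  with Suc.prems show ?case
    by (simp add: exp_utility_Suc)
qed simp

definition bellman_residual :: "real \<Rightarrow> (nat \<Rightarrow> 's \<Rightarrow> 'a \<Rightarrow> 's pmf) \<Rightarrow> (nat \<Rightarrow> 's \<Rightarrow> 'a \<Rightarrow> real)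
    \<Rightarrow> (nat \<Rightarrow> nat \<Rightarrow> 's \<Rightarrow> real) \<Rightarrow> nat \<Rightarrow> nat \<Rightarrow> 's \<Rightarrow> 'a \<Rightarrow> real" where
  "bellman_residual \<beta> P r U h n s a =
     U h (Suc n) s - exp (\<beta> * r h s a) * measure_pmf.expectation (P h s a) (U (Suc h) n)"

definition weighted_bellman_residuals :: "real \<Rightarrow> (nat \<Rightarrow> 's \<Rightarrow> 'a \<Rightarrow> 's pmf)
    \<Rightarrow> (nat \<Rightarrow> 's \<Rightarrow> 'a \<Rightarrow> real) \<Rightarrow> (nat \<Rightarrow> nat \<Rightarrow> 's \<Rightarrow> real) \<Rightarrow> ('s,'a) policy
    \<Rightarrow> nat \<Rightarrow> nat \<Rightarrow> 's list \<Rightarrow> real" where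
  "weighted_bellman_residuals \<beta> P r U pol h n xs =
     (\<Sum>i<n. exp (\<beta> * ret r pol h (take i xs)) *
             bellman_residual \<beta> P r U (h + i) (n - Suc i) (xs ! i) (pol (h + i) (xs ! i)))"

lemma weighted_bellman_residuals_Cons:
  "weighted_bellman_residuals \<beta> P r U pol h (Suc n) (s # xs) =
   bellman_residual \<beta> P r U h n s (pol h s) +
   exp (\<beta> * r h s (pol h s)) * weighted_bellman_residuals \<beta> P r U pol (Suc h) n xs"
  unfolding weighted_bellman_residuals_def sum.lessThan_Suc_shift
  by (simp add: sum_distrib_left distrib_left exp_add ac_simps)

lemma expectation_weighted_bellman_residuals:
  fixes P :: "nat \<Rightarrow> 's::finite \<Rightarrow> 'a \<Rightarrow> 's pmf"
  assumes "\<And>h s. U h 0 s = 1"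
  shows "measure_pmf.expectation (traj P pol h n s)
           (weighted_bellman_residuals \<beta> P r U pol h n) =
         U h n s - exp_utility \<beta> P r pol h n s"
proof (induction n arbitrary: h s)
  case 0
  then show ?case by (simp add: assms weighted_bellman_residuals_def)
next
  case (Suc n)
  define a where "a = pol h s"
  define c where "c = exp (\<beta> * r h s a)"
  have "measure_pmf.expectation (traj P pol h (Suc n) s)
          (weighted_bellman_residuals \<beta> P r U pol h (Suc n)) =
        measure_pmf.expectation (P h s a)
          (\<lambda>s'. bellman_residual \<beta> P r U h n s a +
                c * (U (Suc h) n s' - exp_utility \<beta> P r pol (Suc h) n s'))"
    by (simp add: expectation_traj_Suc weighted_bellman_residuals_Cons
        integrable_measure_pmf_finite finite_set_pmf_traj Suc.IH flip: a_def c_def)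
  also have "\<dots> = U h (Suc n) s - exp_utility \<beta> P r pol h (Suc n) s"
    by (simp add: bellman_residual_def exp_utility_Suc integrable_measure_pmf_finite
        algebra_simps flip: a_def c_def)
  finally show ?case .
qed

lemma exp_Vpi:
  fixes P :: "nat \<Rightarrow> 's::finite \<Rightarrow> 'a \<Rightarrow> 's pmf"
  assumes "\<beta> \<noteq> 0"
  shows "exp (\<beta> * Vpi \<beta> H P r pol h s) = exp_utility \<beta> P r pol h (Suc H - h) s"
  using assms exp_utility_pos[of \<beta> P r pol h "Suc H - h" s]
  by (simp add: Vpi_def exp_utility_def[symmetric])

lemma exp_Qpi:
  fixes P :: "nat \<Rightarrow> 's::finite \<Rightarrow> 'a \<Rightarrow> 's pmf"
  assumes "\<beta> \<noteq> 0" and "h \<le> H"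
  shows "exp (\<beta> * Qpi \<beta> H P r pol h s a) =
         exp (\<beta> * r h s a) *
         measure_pmf.expectation (P h s a) (exp_utility \<beta> P r pol (Suc h) (H - h))"
proof -
  have "exp_utility \<beta> P r (pol(h := (\<lambda>_. a))) (Suc h) (H - h) =
        exp_utility \<beta> P r pol (Suc h) (H - h)"
    by (intro ext exp_utility_cong) simp
  with assms show ?thesis
    by (simp add: Qpi_def exp_Vpi Suc_diff_le exp_utility_Suc)
qed

lemma Vstar_optimal_policy:
  assumes "optimal_policy \<beta> H P r pis" and "0 < h"
  shows "Vstar \<beta> H P r h s = Vpi \<beta> H P r pis h s"
proof (cases "h \<le> H")
  case True
  with assms show ?thesis by (simp add: optimal_policy_def)
next
  case False
  then have "Vpi \<beta> H P r pol h s = 0" for pol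
    by (simp add: Vpi_def)
  then show ?thesis by (simp add: Vstar_def)
qed

lemma gap_eq_bellman_residual:
  fixes P :: "nat \<Rightarrow> 's::finite \<Rightarrow> 'a \<Rightarrow> 's pmf"
  assumes "\<beta> \<noteq> 0" and "optimal_policy \<beta> H P r pis" and "h \<in> {1..H}"
  shows "gap \<beta> H P r pis h s a tau =
         (1 / \<beta>) * exp (\<beta> * Rprefix r tau) *
         bellman_residual \<beta> P r (exp_utility \<beta> P r pis) h (H - h) s a"
  using assms
  by (simp add: gap_def bellman_residual_def Vstar_optimal_policy exp_Vpi exp_Qpi Suc_diff_le)

lemma Rprefix_traj_prefix:
  assumes "i \<le> length xs"
  shows "Rprefix r (traj_prefix pol xs i) = ret r pol 1 (take i xs)"
  using assms by (simp add: Rprefix_def traj_prefix_def ret_def)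

theorem lemma4:
  fixes \<beta> :: real and H :: nat
    and P :: "nat \<Rightarrow> 's::finite \<Rightarrow> 'a::finite \<Rightarrow> 's pmf"
    and r :: "nat \<Rightarrow> 's \<Rightarrow> 'a \<Rightarrow> real"
    and s1 :: 's and pis pik :: "('s,'a) policy"
  assumes "\<beta> \<noteq> 0"
    and "\<And>h s a. 0 \<le> r h s a \<and> r h s a \<le> 1"
    and "optimal_policy \<beta> H P r pis"
  shows "(1 / \<beta>) * (exp (\<beta> * Vstar \<beta> H P r 1 s1) - exp (\<beta> * Vpi \<beta> H P r pik 1 s1)) =
         measure_pmf.expectation (traj P pik 1 H s1)
           (\<lambda>xs. \<Sum>h=1..H. gap \<beta> H P r pis h (xs ! (h - 1)) (pik h (xs ! (h - 1)))
                              (traj_prefix pik xs (h - 1)))"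
proof -
  have gaps: "(\<Sum>h=1..H. gap \<beta> H P r pis h (xs ! (h - 1)) (pik h (xs ! (h - 1)))
                 (traj_prefix pik xs (h - 1))) =
      (1 / \<beta>) * weighted_bellman_residuals \<beta> P r (exp_utility \<beta> P r pis) pik 1 H xs"
    if "xs \<in> set_pmf (traj P pik 1 H s1)" for xs
    using that assms(1,3)
    by (simp add: length_traj sum.atLeast1_atMost_eq gap_eq_bellman_residual Rprefix_traj_prefix
        weighted_bellman_residuals_def sum_distrib_left)
  have "(1 / \<beta>) * (exp (\<beta> * Vstar \<beta> H P r 1 s1) - exp (\<beta> * Vpi \<beta> H P r pik 1 s1)) =
        (1 / \<beta>) * (exp_utility \<beta> P r pis 1 H s1 - exp_utility \<beta> P r pik 1 H s1)"
    using assms(1,3) by (simp add: Vstar_optimal_policy exp_Vpi)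
  also have "\<dots> = (1 / \<beta>) * measure_pmf.expectation (traj P pik 1 H s1)
      (weighted_bellman_residuals \<beta> P r (exp_utility \<beta> P r pis) pik 1 H)"
    by (simp add: expectation_weighted_bellman_residuals)
  also have "\<dots> = measure_pmf.expectation (traj P pik 1 H s1)
      (\<lambda>xs. (1 / \<beta>) * weighted_bellman_residuals \<beta> P r (exp_utility \<beta> P r pis) pik 1 H xs)"
    by simp
  also have "\<dots> = measure_pmf.expectation (traj P pik 1 H s1)
      (\<lambda>xs. \<Sum>h=1..H. gap \<beta> H P r pis h (xs ! (h - 1)) (pik h (xs ! (h - 1)))
                         (traj_prefix pik xs (h - 1)))"
    by (intro integral_cong_AE AE_pmfI gaps[symmetric]) simp_all
  finally show ?thesis .
qed

end
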